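(* For every $n\geq 1$, all vertex degrees in the Fibonacci-sum set-graph $G^F_{A^{(n)}}$ are even.
   Context: Let $\mathcal{F}=\{f_m\}_{m\ge 0}$ be the Fibonacci numbers, $f_0=0$, $f_1=1$, $f_m=f_{m-1}+f_{m-2}$. The Fibonacci-sum set-graph $G^F_{A^{(n)}}$ is the multigraph (loops and multiple edges allowed) whose vertices are in bijection with the nonempty subsets of $A^{(n)}=\{1,\dots,n\}$; between the vertices corresponding to distinct subsets $S,T$ there is one edge for each pair $(i',j')$ with $i'\in S$, $j'\in T$, $i'\neq j'$ and $i'+j'\in\mathcal{F}$, and at the vertex corresponding to $S$ there is one loop for each pair of distinct elements $i',j'\in S$ with $i'+j'\in\mathcal{F}$. The degree of a vertex $v$ is $2l(v)+\sum_{u\neq v}\epsilon(v,u)$, where $l(v)$ is the number of loops at $v$ and $\epsilon(v,u)$ the number of edges between $v$ and $u$. *)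

theory Defs
  imports "HOL-Number_Theory.Fib"
begin

definition is_fib :: "nat \<Rightarrow> bool" where
  "is_fib k \<longleftrightarrow> (\<exists>m. fib m = k)"

definition fsg_vertices :: "nat \<Rightarrow> nat set set" where
  "fsg_vertices n = {S. S \<subseteq> {1..n} \<and> S \<noteq> {}}"

definition fsg_edges :: "nat set \<Rightarrow> nat set \<Rightarrow> nat" where
  "fsg_edges S T = card {(i, j). i \<in> S \<and> j \<in> T \<and> i \<noteq> j \<and> is_fib (i + j)}"

definition fsg_loops :: "nat set \<Rightarrow> nat" where
  "fsg_loops S = card {{i, j} | i j. i \<in> S \<and> j \<in> S \<and> i \<noteq> j \<and> is_fib (i + j)}"

definition fsg_degree :: "nat \<Rightarrow> nat set \<Rightarrow> nat" where
  "fsg_degree n S = 2 * fsg_loops S + (\<Sum>T \<in> fsg_vertices n - {S}. fsg_edges S T)"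

end

theory Submission
  imports Defs
begin

text \<open>Summing the edge counts of S over all vertices T counts every element j of {1..n}
  once for each of the 2^(n-1) subsets containing it, so for n \<ge> 2 this total is even.
  The term T = S of the total is even as well, being the cardinality of a symmetric
  irreflexive relation; hence so is the sum over T \<noteq> S, and the loops contribute
  2 l(S) anyway. For n = 1 the graph has a single vertex.\<close>

lemma card_Pow_containing:
  assumes "finite A" "a \<in> A"
  shows "card {T \<in> Pow A. a \<in> T} = 2 ^ (card A - 1)"
proof -
  have "{T \<in> Pow A. a \<in> T} = insert a ` Pow (A - {a})"
  proof (intro equalityI subsetI)
    fix T assume "T \<in> {T \<in> Pow A. a \<in> T}"
    then have "T = insert a (T - {a})" "T - {a} \<in> Pow (A - {a})"
      by auto
    then show "T \<in> insert a ` Pow (A - {a})"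
      by (rule image_eqI)
  qed (use assms(2) in auto)
  moreover have "inj_on (insert a) (Pow (A - {a}))"
    by (auto simp: inj_on_def)
  ultimately show ?thesis
    using assms by (simp add: card_image card_Pow)
qed

lemma sum_Pow_sum:
  fixes f :: "'a \<Rightarrow> 'b::comm_semiring_1"
  assumes "finite A"
  shows "(\<Sum>T\<in>Pow A. sum f T) = 2 ^ (card A - 1) * sum f A"
proof -
  have "(\<Sum>T\<in>Pow A. sum f T) = (\<Sum>T\<in>Pow A. \<Sum>a\<in>{a \<in> A. a \<in> T}. f a)"
    by (intro sum.cong) (auto intro: arg_cong2[where f = sum])
  also have "\<dots> = (\<Sum>a\<in>A. \<Sum>T\<in>{T \<in> Pow A. a \<in> T}. f a)"
    using assms by (intro sum.swap_restrict) simp_all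
  also have "\<dots> = (\<Sum>a\<in>A. 2 ^ (card A - 1) * f a)"
  proof (rule sum.cong)
    fix a assume "a \<in> A"
    then show "(\<Sum>T\<in>{T \<in> Pow A. a \<in> T}. f a) = 2 ^ (card A - 1) * f a"
      using assms by (simp only: sum_constant card_Pow_containing of_nat_power of_nat_numeral)
  qed simp
  finally show ?thesis
    by (simp add: sum_distrib_left)
qed

lemma even_card_sym_irrefl:
  fixes R :: "('a::linorder \<times> 'a) set"
  assumes "sym R" and "\<And>x. (x, x) \<notin> R"
  shows "even (card R)"
proof (cases "finite R")
  case True
  let ?L = "{(x, y) \<in> R. x < y}"
  have R_split: "R = ?L \<union> ?L\<inverse>"
  proof (intro equalityI subsetI)
    fix p assume "p \<in> R"
    moreover obtain x y where p: "p = (x, y)"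
      by (cases p)
    ultimately have xy: "(x, y) \<in> R"
      by simp
    moreover have "(y, x) \<in> R" "x \<noteq> y"
      using symD[OF assms(1) xy] assms(2) xy by blast+
    ultimately show "p \<in> ?L \<union> ?L\<inverse>"
      unfolding p by (cases "x < y") auto
  next
    fix p assume "p \<in> ?L \<union> ?L\<inverse>"
    then show "p \<in> R"
      using symD[OF assms(1)] by auto
  qed
  have "finite ?L"
    using True by (rule finite_subset[rotated]) auto
  then have "card (?L \<union> ?L\<inverse>) = card ?L + card (?L\<inverse>)"
    by (intro card_Un_disjoint) auto
  then have "card R = 2 * card ?L"
    using arg_cong[where f = card, OF R_split] by simp
  then show ?thesis
    by simp
qed simp

lemma even_fsg_edges_self: "even (fsg_edges S S)"
  unfolding fsg_edges_def
  by (rule even_card_sym_irrefl) (auto simp: sym_def add.commute)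

lemma fsg_edges_eq_sum:
  assumes "finite S" "finite T"
  shows "fsg_edges S T = (\<Sum>j\<in>T. card {i \<in> S. i \<noteq> j \<and> is_fib (i + j)})"
proof -
  have "{(i, j). i \<in> S \<and> j \<in> T \<and> i \<noteq> j \<and> is_fib (i + j)}
        = prod.swap ` (SIGMA j:T. {i \<in> S. i \<noteq> j \<and> is_fib (i + j)})"
    by auto
  then show ?thesis
    unfolding fsg_edges_def using assms
    by (simp add: card_image)
qed

lemma sum_fsg_edges_vertices:
  assumes "finite S"
  shows "(\<Sum>T\<in>fsg_vertices n. fsg_edges S T)
         = 2 ^ (n - 1) * (\<Sum>j\<in>{1..n}. card {i \<in> S. i \<noteq> j \<and> is_fib (i + j)})"
proof -
  have "(\<Sum>T\<in>fsg_vertices n. fsg_edges S T) = (\<Sum>T\<in>Pow {1..n}. fsg_edges S T)"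
    by (intro sum.mono_neutral_left) (auto simp: fsg_vertices_def fsg_edges_def)
  also have "\<dots> = (\<Sum>T\<in>Pow {1..n}. \<Sum>j\<in>T. card {i \<in> S. i \<noteq> j \<and> is_fib (i + j)})"
    using assms by (intro sum.cong) (auto simp: fsg_edges_eq_sum finite_subset)
  finally show ?thesis
    by (simp add: sum_Pow_sum)
qed

theorem theorem2p7:
  fixes n :: nat and S :: "nat set"
  assumes "n \<ge> 1" and "S \<in> fsg_vertices n"
  shows "even (fsg_degree n S)"
proof (cases "n = 1")
  case True
  have "fsg_vertices 1 = {{1}}"
    by (auto simp: fsg_vertices_def)
  with True assms(2) have no_neighbours: "fsg_vertices n - {S} = {}"
    by simp
  show ?thesis
    unfolding fsg_degree_def no_neighbours by simp
next
  case False
  have "finite S"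
    using assms(2) by (auto simp: fsg_vertices_def intro: finite_subset)
  with False assms(1) have "even (\<Sum>T\<in>fsg_vertices n. fsg_edges S T)"
    by (simp add: sum_fsg_edges_vertices)
  moreover have "finite (fsg_vertices n)"
    by (rule finite_subset[of _ "Pow {1..n}"]) (auto simp: fsg_vertices_def)
  ultimately have "even (\<Sum>T\<in>fsg_vertices n - {S}. fsg_edges S T)"
    using assms(2) even_fsg_edges_self by (simp add: sum.remove)
  then show ?thesis
    by (simp add: fsg_degree_def)
qed

end
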